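(* Let $A$ and $B$ be nontrivial commutative groups. Then $\delta(A,B)=\nu(\mathbb{Z}_{e(B)}[A])-1$ (with the convention $\infty-1=\infty$). In particular, $\delta(A,B)<\infty$ if and only if the augmentation ideal of $\mathbb{Z}_{e(B)}[A]$ is nilpotent, and $\delta(A,B)$ depends only on $A$ and $\exp(B)$.
   Context: For commutative groups $A,B$, $B^A$ denotes the commutative group (under pointwise addition) of all maps $A\to B$. For $a\in A$, the difference operator $\Delta_a:B^A\to B^A$ is $(\Delta_a f)(x)=f(x+a)-f(x)$. Let $\widetilde{\mathbb N}=\mathbb N\cup\{-\infty,\infty\}$ ($\mathbb N=\{0,1,2,\dots\}$), totally ordered with $-\infty$ least and $\infty$ greatest. The functional degree $\operatorname{fdeg}(f)\in\widetilde{\mathbb N}$ of $f\in B^A$ is: $-\infty$ if $f=0$; otherwise the least $n\in\mathbb N$ such that $\Delta_{a_1}\cdots\Delta_{a_{n+1}}f=0$ for all $a_1,\dots,a_{n+1}\in A$; and $\infty$ if no such $n$ exists. Define $\delta(A,B)=\sup\{\operatorname{fdeg}(f): f\in B^A\}$. $\mathbb{Z}_n=\mathbb{Z}/n\mathbb{Z}$ (so $\mathbb{Z}_0=\mathbb{Z}$). $\exp(B)$ is the least $n\ge1$ with $nB=0$, or $\infty$; $e(B)=\exp(B)$ if finite and $e(B)=0$ otherwise. For a commutative ring $R$ and commutative group $A$, the augmentation ideal $I$ of the group ring $R[A]$ is the kernel of $\sum r_a[a]\mapsto\sum r_a$, and $\nu(R[A])$ is the least $n\in\mathbb N$ with $I^n=0$,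 or $\infty$ if none exists. *)

theory Defs
  imports Main "HOL-Library.Poly_Mapping" "HOL-Library.Extended_Nat" "HOL-Library.Option_ord"
begin

text \<open>Extended naturals N-tilde = N + {-infinity, infinity} are modelled as enat option:
  None = -infinity, Some (enat n) = n, Some infinity = infinity (ordered by Option_ord).\<close>

definition diff_op :: "'a::ab_group_add \<Rightarrow> ('a \<Rightarrow> 'b::ab_group_add) \<Rightarrow> ('a \<Rightarrow> 'b)" where
  "diff_op a f = (\<lambda>x. f (x + a) - f x)"

definition iter_diff :: "'a::ab_group_add list \<Rightarrow> ('a \<Rightarrow> 'b::ab_group_add) \<Rightarrow> ('a \<Rightarrow> 'b)" where
  "iter_diff as f = foldr diff_op as f"

definition kills :: "nat \<Rightarrow> ('a::ab_group_add \<Rightarrow> 'b::ab_group_add) \<Rightarrow> bool" where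
  "kills n f \<longleftrightarrow> (\<forall>as. length as = Suc n \<longrightarrow> iter_diff as f = (\<lambda>_. 0))"

definition fdeg :: "('a::ab_group_add \<Rightarrow> 'b::ab_group_add) \<Rightarrow> enat option" where
  "fdeg f = (if f = (\<lambda>_. 0) then None
             else if \<exists>n. kills n f then Some (enat (LEAST n. kills n f))
             else Some \<infinity>)"

definition delta :: "'a::ab_group_add itself \<Rightarrow> 'b::ab_group_add itself \<Rightarrow> enat option" where
  "delta _ _ = (SUP f \<in> (UNIV :: ('a \<Rightarrow> 'b) set). fdeg f)"

definition nsum :: "nat \<Rightarrow> 'b::ab_group_add \<Rightarrow> 'b" where
  "nsum n b = (\<Sum>i<n. b)"

definition e_grp :: "'b::ab_group_add itself \<Rightarrow> nat" where
  "e_grp _ = (if \<exists>n\<ge>1. \<forall>b::'b. nsum n b = 0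
              then (LEAST n. n \<ge> 1 \<and> (\<forall>b::'b. nsum n b = 0)) else 0)"

text \<open>Group ring R[A] = finitely supported functions A to R (type a \<Rightarrow>0 r) with convolution product.\<close>
definition augmentation :: "('a \<Rightarrow>\<^sub>0 'r::comm_ring_1) \<Rightarrow> 'r" where
  "augmentation x = (\<Sum>a\<in>Poly_Mapping.keys x. Poly_Mapping.lookup x a)"

definition aug_ideal :: "('a::comm_monoid_add \<Rightarrow>\<^sub>0 'r::comm_ring_1) set" where
  "aug_ideal = {x. augmentation x = 0}"

definition ideal_prod :: "'r::comm_ring_1 set \<Rightarrow> 'r set \<Rightarrow> 'r set" where
  "ideal_prod I J = {x. \<exists>ps. (\<forall>p\<in>set ps. fst p \<in> I \<and> snd p \<in> J) \<and> x = (\<Sum>p\<leftarrow>ps. fst p * snd p)}"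

fun ideal_pow :: "'r::comm_ring_1 set \<Rightarrow> nat \<Rightarrow> 'r set" where
  "ideal_pow I 0 = UNIV"
| "ideal_pow I (Suc n) = ideal_prod I (ideal_pow I n)"

definition nu :: "'a::comm_monoid_add itself \<Rightarrow> 'r::comm_ring_1 itself \<Rightarrow> enat" where
  "nu _ _ = (if \<exists>n. ideal_pow (aug_ideal :: ('a \<Rightarrow>\<^sub>0 'r) set) n = {0}
             then enat (LEAST n. ideal_pow (aug_ideal :: ('a \<Rightarrow>\<^sub>0 'r) set) n = {0}) else \<infinity>)"

text \<open>'r is (isomorphic to) Z_m: the canonical map Z \<rightarrow> 'r is surjective with kernel mZ.\<close>
definition is_Zmod :: "'r::comm_ring_1 itself \<Rightarrow> nat \<Rightarrow> bool" where
  "is_Zmod _ m \<longleftrightarrow> surj (of_int :: int \<Rightarrow> 'r) \<and> (\<forall>k. (of_int k = (0::'r)) \<longleftrightarrow> int m dvd k)"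

end

(*
  By induction on the list of shifts, Delta_{a_1} ... Delta_{a_n} f (x) is the sum over y of
  c(y) * f (x + y), where c(y) is the coefficient of [y] in the product of the elements [a_i] - 1
  of Z[A].  Evaluating at point masses shows that all these iterated differences vanish on B^A
  iff e(B) divides every coefficient c(y), i.e. iff the product vanishes in Z_e(B)[A].  As the
  augmentation ideal I is additively spanned by multiples of the elements [a] - 1, its n-th power
  is zero iff all n-fold products of them are.  Hence fdeg f <= m for all f : A -> B iff
  I^(m+1) = 0, which gives delta(A,B) = nu - 1 and shows that delta depends on B only via e(B).
*)

theory Submission
  imports Defs
begin

lemma nsum_0 [simp]: "nsum 0 b = 0"
  by (simp add: nsum_def)

lemma nsum_Suc [simp]: "nsum (Suc n) b = nsum n b + b"
  by (simp add: nsum_def)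

lemma nsum_zero [simp]: "nsum n 0 = 0"
  by (simp add: nsum_def)

lemma nsum_add: "nsum (m + n) b = nsum m b + nsum n b"
  by (induct n) (auto simp: add.assoc)

lemma nsum_mult: "nsum (m * n) b = nsum m (nsum n b)"
  by (induct m) (auto simp: nsum_add add.commute)

(* The class ab_group_add has no action of the integers, so k * b is built from n-fold sums. *)
definition zmult :: "int \<Rightarrow> 'b::ab_group_add \<Rightarrow> 'b" where
  "zmult k b = nsum (nat k) b - nsum (nat (- k)) b"

lemma zmult_0_left [simp]: "zmult 0 b = 0"
  by (simp add: zmult_def)

lemma zmult_0_right [simp]: "zmult k 0 = 0"
  by (simp add: zmult_def)

lemma zmult_of_nat_diff: "zmult (int m - int n) b = nsum m b - nsum n b"
proof (cases "n \<le> m")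
  case True
  then have "nsum m b = nsum (m - n) b + nsum n b"
    using nsum_add[of "m - n" n b] by simp
  with True show ?thesis by (simp add: zmult_def nat_diff_distrib')
next
  case False
  then have "nsum n b = nsum (n - m) b + nsum m b"
    using nsum_add[of "n - m" m b] by simp
  with False show ?thesis by (simp add: zmult_def nat_diff_distrib')
qed

lemma zmult_diff: "zmult (k - l) b = zmult k b - zmult l b"
proof -
  have "k - l = int (nat k + nat (- l)) - int (nat (- k) + nat l)"
    by simp
  then show ?thesis
    by (simp only: zmult_of_nat_diff nsum_add) (simp add: zmult_def)
qed

lemma zmult_eq_0_iff: "zmult k b = 0 \<longleftrightarrow> nsum (nat \<bar>k\<bar>) b = 0"
  by (cases "k \<ge> 0") (simp_all add: zmult_def)

lemma nsum_e_grp: "nsum (e_grp TYPE('b)) (b :: 'b::ab_group_add) = 0"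
proof (cases "\<exists>n\<ge>1. \<forall>b::'b. nsum n b = 0")
  case True
  then show ?thesis
    unfolding e_grp_def using LeastI_ex[OF True] by simp
next
  case False
  then show ?thesis
    unfolding e_grp_def if_not_P[OF False] by simp
qed

lemma nsum_eq_0_iff_e_grp_dvd:
  "(\<forall>b::'b::ab_group_add. nsum n b = 0) \<longleftrightarrow> e_grp TYPE('b) dvd n"
proof
  assume kills: "\<forall>b::'b. nsum n b = 0"
  show "e_grp TYPE('b) dvd n"
  proof (cases "n = 0")
    case False
    let ?P = "\<lambda>n. n \<ge> 1 \<and> (\<forall>b::'b. nsum n b = 0)"
    have "?P n" using False kills by simp
    then have e: "e_grp TYPE('b) = (LEAST n. ?P n)" "e_grp TYPE('b) \<ge> 1"
      unfolding e_grp_def by (auto intro: LeastI2_ex)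
    have reduce: "nsum n b = nsum (n mod e_grp TYPE('b)) b" for b :: 'b
      using nsum_add[of "n div e_grp TYPE('b) * e_grp TYPE('b)" "n mod e_grp TYPE('b)" b]
      by (simp add: nsum_mult nsum_e_grp)
    then have "\<not> ?P (n mod e_grp TYPE('b))"
      using e mod_less_divisor[of "e_grp TYPE('b)" n] not_less_Least by fastforce
    then show ?thesis using kills by (auto simp: mod_eq_0_iff_dvd[symmetric] reduce)
  qed simp
next
  assume "e_grp TYPE('b) dvd n"
  then show "\<forall>b::'b. nsum n b = 0"
    by (auto simp: nsum_mult mult.commute[of _ "e_grp TYPE('b)"] nsum_e_grp)
qed

lemma zmult_eq_0_iff_e_grp_dvd:
  "(\<forall>b::'b::ab_group_add. zmult k b = 0) \<longleftrightarrow> int (e_grp TYPE('b)) dvd k"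
  by (simp add: zmult_eq_0_iff nsum_eq_0_iff_e_grp_dvd)

lemma e_grp_neq_1: "\<exists>b::'b::ab_group_add. b \<noteq> 0 \<Longrightarrow> e_grp TYPE('b) \<noteq> 1"
  using nsum_e_grp[where 'b='b] by force

(* Coefficient of [y] in the product of the elements [a] - 1, a in as, of the group ring Z[A]. *)
fun diff_coeff :: "'a::ab_group_add list \<Rightarrow> 'a \<Rightarrow> int" where
  "diff_coeff [] y = (if y = 0 then 1 else 0)"
| "diff_coeff (a # as) y = diff_coeff as (y - a) - diff_coeff as y"

fun subsums :: "'a::ab_group_add list \<Rightarrow> 'a set" where
  "subsums [] = {0}"
| "subsums (a # as) = subsums as \<union> (\<lambda>y. y + a) ` subsums as"

lemma finite_subsums [simp]: "finite (subsums as)"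
  by (induct as) auto

lemma diff_coeff_eq_0: "y \<notin> subsums as \<Longrightarrow> diff_coeff as y = 0"
proof (induct as arbitrary: y)
  case (Cons a as)
  then have "y \<notin> subsums as" "y - a \<notin> subsums as"
    by (auto simp: image_iff)
  with Cons show ?case by simp
qed simp

lemma iter_diff_Nil [simp]: "iter_diff [] f = f"
  by (simp add: iter_diff_def)

lemma iter_diff_Cons [simp]: "iter_diff (a # as) f = diff_op a (iter_diff as f)"
  by (simp add: iter_diff_def)

lemma iter_diff_zero [simp]: "iter_diff as (\<lambda>_. 0) = (\<lambda>_. 0)"
  by (induct as) (auto simp: diff_op_def)

lemma iter_diff_eq_sum:
  "iter_diff as f x = (\<Sum>y\<in>subsums as. zmult (diff_coeff as y) (f (x + y)))"
proof (induct as arbitrary: x)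
  case Nil
  show ?case by (simp add: zmult_def)
next
  case (Cons a as)
  let ?S = "subsums as" and ?T = "(\<lambda>y. y + a) ` subsums as"
  have "diff_coeff as (y - a) = 0" if "y \<notin> ?T" for y
    using that by (intro diff_coeff_eq_0) (metis diff_add_cancel image_eqI)
  then have "(\<Sum>y\<in>?S \<union> ?T. zmult (diff_coeff as (y - a)) (f (x + y)))
      = (\<Sum>y\<in>?T. zmult (diff_coeff as (y - a)) (f (x + y)))"
    by (intro sum.mono_neutral_right) auto
  also have "\<dots> = (\<Sum>y\<in>?S. zmult (diff_coeff as y) (f (x + a + y)))"
    by (subst sum.reindex) (auto simp: inj_on_def algebra_simps)
  finally have shifted: "(\<Sum>y\<in>?S \<union> ?T. zmult (diff_coeff as (y - a)) (f (x + y)))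
      = iter_diff as f (x + a)"
    by (simp add: Cons)
  have unshifted: "(\<Sum>y\<in>?S \<union> ?T. zmult (diff_coeff as y) (f (x + y))) = iter_diff as f x"
    unfolding Cons by (rule sum.mono_neutral_right) (auto simp: diff_coeff_eq_0)
  show ?case
    by (simp add: zmult_diff sum_subtractf shifted unshifted diff_op_def)
qed

lemma iter_diff_eq_0_iff:
  "(\<forall>f::'a::ab_group_add \<Rightarrow> 'b::ab_group_add. iter_diff as f = (\<lambda>_. 0))
     \<longleftrightarrow> (\<forall>y. int (e_grp TYPE('b)) dvd diff_coeff as y)"
proof
  assume "\<forall>y. int (e_grp TYPE('b)) dvd diff_coeff as y"
  then show "\<forall>f::'a \<Rightarrow> 'b. iter_diff as f = (\<lambda>_. 0)"
    by (simp add: fun_eq_iff iter_diff_eq_sum zmult_eq_0_iff_e_grp_dvd[symmetric])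
next
  assume vanish: "\<forall>f::'a \<Rightarrow> 'b. iter_diff as f = (\<lambda>_. 0)"
  show "\<forall>y. int (e_grp TYPE('b)) dvd diff_coeff as y"
  proof (rule ccontr)
    assume "\<not> ?thesis"
    then obtain y0 and b :: 'b where b: "zmult (diff_coeff as y0) b \<noteq> 0"
      by (auto simp: zmult_eq_0_iff_e_grp_dvd[symmetric])
    then have "y0 \<in> subsums as"
      using diff_coeff_eq_0 by fastforce
    then have "iter_diff as (\<lambda>z. if z = y0 then b else 0) 0 = zmult (diff_coeff as y0) b"
      by (simp add: iter_diff_eq_sum if_distrib[of "zmult _"] sum.If_cases Int_absorb1)
    with vanish b show False by simp
  qed
qed

definition diff_coeffs_dvd :: "'a::ab_group_add itself \<Rightarrow> nat \<Rightarrow> nat \<Rightarrow> bool" where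
  "diff_coeffs_dvd _ e n \<longleftrightarrow> (\<forall>as::'a list. length as = n \<longrightarrow> (\<forall>y. int e dvd diff_coeff as y))"

definition least_enat :: "(nat \<Rightarrow> bool) \<Rightarrow> enat" where
  "least_enat P = (if \<exists>n. P n then enat (LEAST n. P n) else \<infinity>)"

lemma eq_least_enat_minus_1:
  assumes "\<not> P 0" and "\<And>m. t \<le> enat m \<longleftrightarrow> P (Suc m)"
  shows "t = least_enat P - 1"
proof (cases t)
  case (enat k)
  have "P (Suc k)"
    using assms(2)[of k] enat by simp
  have "(LEAST n. P n) = Suc k"
  proof (rule Least_equality)
    show "P (Suc k)" by fact
    show "Suc k \<le> n" if "P n" for n
      using that assms enat by (cases n) auto
  qed
  with \<open>P (Suc k)\<close> enat show ?thesis
    by (auto simp: least_enat_def one_enat_def)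
next
  case infinity
  have "\<not> P n" for n
    using assms infinity by (cases n) auto
  with infinity show ?thesis by (simp add: least_enat_def)
qed

lemma kills_Suc: "kills n f \<Longrightarrow> kills (Suc n) f"
  unfolding kills_def
proof (intro allI impI)
  fix as :: "'a list"
  assume "\<forall>as. length as = Suc n \<longrightarrow> iter_diff as f = (\<lambda>_. 0)" "length as = Suc (Suc n)"
  then show "iter_diff as f = (\<lambda>_. 0)"
    by (cases as) (auto simp: diff_op_def)
qed

lemma kills_mono: "n \<le> m \<Longrightarrow> kills n f \<Longrightarrow> kills m f"
  by (induct m rule: dec_induct) (auto intro: kills_Suc)

lemma fdeg_le_iff_kills: "fdeg f \<le> Some (enat m) \<longleftrightarrow> kills m f"
proof -
  consider "f = (\<lambda>_. 0)" | "f \<noteq> (\<lambda>_. 0)" "\<exists>n. kills n f" | "\<nexists>n. kills n f"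
    by (auto simp: kills_def)
  then show ?thesis
  proof cases
    case 2
    then show ?thesis
      by (auto simp: fdeg_def intro: Least_le kills_mono[OF _ LeastI_ex])
  qed (auto simp: fdeg_def kills_def)
qed

lemma delta_le_iff:
  "delta TYPE('a::ab_group_add) TYPE('b::ab_group_add) \<le> Some (enat m)
     \<longleftrightarrow> diff_coeffs_dvd TYPE('a) (e_grp TYPE('b)) (Suc m)"
  by (auto simp: delta_def SUP_le_iff fdeg_le_iff_kills kills_def diff_coeffs_dvd_def
      iter_diff_eq_0_iff[symmetric])

lemma delta_eq_least_enat:
  assumes "\<exists>b::'b::ab_group_add. b \<noteq> 0"
  shows "delta TYPE('a::ab_group_add) TYPE('b)
    = Some (least_enat (diff_coeffs_dvd TYPE('a) (e_grp TYPE('b))) - 1)"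
proof -
  from assms obtain b :: 'b where "b \<noteq> 0" by blast
  then have "Some (enat 0) \<le> fdeg (\<lambda>_::'a. b)"
    by (auto simp: fdeg_def zero_enat_def[symmetric] fun_eq_iff)
  also have "\<dots> \<le> delta TYPE('a) TYPE('b)"
    unfolding delta_def by (rule SUP_upper) simp
  finally obtain t where t: "delta TYPE('a) TYPE('b) = Some t"
    by (cases "delta TYPE('a) TYPE('b)") auto
  have "\<not> diff_coeffs_dvd TYPE('a) (e_grp TYPE('b)) 0"
    using e_grp_neq_1[OF assms] by (auto simp: diff_coeffs_dvd_def)
  then have "t = least_enat (diff_coeffs_dvd TYPE('a) (e_grp TYPE('b))) - 1"
    by (rule eq_least_enat_minus_1) (simp flip: delta_le_iff add: t)
  with t show ?thesis by simp
qed

definition aug_gen :: "'a \<Rightarrow> ('a::comm_monoid_add \<Rightarrow>\<^sub>0 'r::comm_ring_1)" where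
  "aug_gen a = Poly_Mapping.single a 1 - 1"

lemma lookup_single_1_mult:
  "Poly_Mapping.lookup (Poly_Mapping.single a (1::'r::comm_ring_1) * g) y
     = Poly_Mapping.lookup g (y - (a::'a::ab_group_add))"
proof -
  have "Poly_Mapping.lookup (Poly_Mapping.single a (1::'r) * g) y
      = (\<Sum>q. Poly_Mapping.lookup g q when y = a + q)"
    by (simp add: lookup_mult lookup_single when_mult)
  also have "\<dots> = (\<Sum>q. Poly_Mapping.lookup g q when q = y - a)"
    by (rule Sum_any.cong) (auto simp: when_def algebra_simps)
  finally show ?thesis by simp
qed

lemma lookup_prod_aug_gen:
  "Poly_Mapping.lookup (prod_list (map aug_gen as) :: 'a::ab_group_add \<Rightarrow>\<^sub>0 'r::comm_ring_1) y
     = of_int (diff_coeff as y)"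
  by (induct as arbitrary: y)
    (simp_all add: aug_gen_def lookup_one when_def left_diff_distrib lookup_minus lookup_single_1_mult)

lemma augmentation_eq_sum:
  assumes "finite K" "Poly_Mapping.keys x \<subseteq> K"
  shows "augmentation x = (\<Sum>a\<in>K. Poly_Mapping.lookup x a)"
  unfolding augmentation_def using assms
  by (intro sum.mono_neutral_left) (auto simp: in_keys_iff)

lemma aug_gen_in_aug_ideal: "(aug_gen a :: 'a::comm_monoid_add \<Rightarrow>\<^sub>0 'r::comm_ring_1) \<in> aug_ideal"
proof -
  let ?x = "aug_gen a :: 'a \<Rightarrow>\<^sub>0 'r"
  have "Poly_Mapping.keys ?x \<subseteq> {a, 0}"
    by (auto simp: aug_gen_def in_keys_iff lookup_minus lookup_one lookup_single when_def
        split: if_splits)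
  then have "augmentation ?x = (\<Sum>b\<in>{a, 0}. Poly_Mapping.lookup ?x b)"
    by (intro augmentation_eq_sum) auto
  also have "\<dots> = 0"
    by (cases "a = 0") (auto simp: aug_gen_def lookup_minus lookup_one lookup_single when_def)
  finally show ?thesis by (simp add: aug_ideal_def)
qed

lemma prod_aug_gen_in_ideal_pow:
  "(prod_list (map aug_gen as) :: 'a::comm_monoid_add \<Rightarrow>\<^sub>0 'r::comm_ring_1)
    \<in> ideal_pow aug_ideal (length as)"
proof (induct as)
  case (Cons a as)
  then show ?case
    unfolding ideal_pow.simps length_Cons ideal_prod_def
    by (intro CollectI exI[of _ "[(aug_gen a, prod_list (map aug_gen as))]"])
      (simp add: aug_gen_in_aug_ideal)
qed simp

lemma zero_in_ideal_pow: "0 \<in> ideal_pow I n"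
  by (cases n) (auto simp: ideal_prod_def intro: exI[of _ "[]"])

inductive_set aug_span :: "nat \<Rightarrow> ('a::comm_monoid_add \<Rightarrow>\<^sub>0 'r::comm_ring_1) set" for n where
  zero: "0 \<in> aug_span n"
| add_prod: "length as = n \<Longrightarrow> z \<in> aug_span n \<Longrightarrow> r * prod_list (map aug_gen as) + z \<in> aug_span n"

lemma aug_span_add: "x \<in> aug_span n \<Longrightarrow> y \<in> aug_span n \<Longrightarrow> x + y \<in> aug_span n"
  by (induct x rule: aug_span.induct) (auto simp: add.assoc intro: aug_span.intros)

lemma aug_span_sum: "finite K \<Longrightarrow> (\<And>k. k \<in> K \<Longrightarrow> g k \<in> aug_span n) \<Longrightarrow> sum g K \<in> aug_span n"
  by (induct K rule: finite_induct) (auto intro: aug_span.zero aug_span_add)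

lemma aug_span_sum_list: "(\<And>x. x \<in> set xs \<Longrightarrow> x \<in> aug_span n) \<Longrightarrow> sum_list xs \<in> aug_span n"
  by (induct xs) (auto intro: aug_span.zero aug_span_add)

lemma mult_aug_gen_in_aug_span_1: "r * aug_gen a \<in> aug_span 1"
  using aug_span.add_prod[where as="[a]" and z=0 and r=r] by (simp add: aug_span.zero)

lemma aug_gen_mult_aug_span:
  "y \<in> aug_span n \<Longrightarrow> r * aug_gen a * y \<in> aug_span (Suc n)"
proof (induct y rule: aug_span.induct)
  case (add_prod as z r')
  have "r * aug_gen a * (r' * prod_list (map aug_gen as) + z)
      = (r * r') * prod_list (map aug_gen (a # as)) + r * aug_gen a * z"
    by (simp add: algebra_simps)
  also have "\<dots> \<in> aug_span (Suc n)"
    using add_prod by (intro aug_span.add_prod) simp_all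
  finally show ?case .
qed (simp add: aug_span.zero)

lemma aug_span_1_mult: "x \<in> aug_span 1 \<Longrightarrow> y \<in> aug_span n \<Longrightarrow> x * y \<in> aug_span (Suc n)"
proof (induct x rule: aug_span.induct)
  case (add_prod as z r)
  then obtain a where "as = [a]"
    by (cases as) auto
  with add_prod show ?case
    by (simp add: distrib_right aug_span_add aug_gen_mult_aug_span)
qed (simp add: aug_span.zero)

lemma aug_ideal_subset_aug_span_1:
  "(aug_ideal :: ('a::comm_monoid_add \<Rightarrow>\<^sub>0 'r::comm_ring_1) set) \<subseteq> aug_span 1"
proof
  fix x :: "'a \<Rightarrow>\<^sub>0 'r"
  assume "x \<in> aug_ideal"
  let ?c = "Poly_Mapping.lookup x"
  have aug: "(\<Sum>a\<in>Poly_Mapping.keys x. ?c a) = 0"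
    using \<open>x \<in> aug_ideal\<close> by (simp add: aug_ideal_def augmentation_def)
  have "x = (\<Sum>a\<in>Poly_Mapping.keys x. Poly_Mapping.single 0 (?c a) * aug_gen a)"
  proof (rule poly_mapping_eqI)
    fix y
    show "?c y = Poly_Mapping.lookup (\<Sum>a\<in>Poly_Mapping.keys x. Poly_Mapping.single 0 (?c a) * aug_gen a) y"
      using aug by (cases "y = 0")
        (auto simp: lookup_sum aug_gen_def algebra_simps mult_single lookup_minus lookup_single
          sum_subtractf when_def in_keys_iff)
  qed
  also have "\<dots> \<in> aug_span 1"
    by (intro aug_span_sum mult_aug_gen_in_aug_span_1) simp
  finally show "x \<in> aug_span 1" .
qed

lemma ideal_pow_subset_aug_span:
  "ideal_pow (aug_ideal :: ('a::ab_group_add \<Rightarrow>\<^sub>0 'r::comm_ring_1) set) n \<subseteq> aug_span n"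
proof (induct n)
  case 0
  have "z * prod_list (map aug_gen []) + 0 \<in> aug_span 0" for z :: "'a \<Rightarrow>\<^sub>0 'r"
    by (intro aug_span.intros) simp_all
  then show ?case by auto
next
  case (Suc n)
  show ?case
  proof
    fix z
    assume "z \<in> ideal_pow (aug_ideal :: ('a \<Rightarrow>\<^sub>0 'r) set) (Suc n)"
    then obtain ps where
      ps: "\<forall>p\<in>set ps. fst p \<in> aug_ideal \<and> snd p \<in> ideal_pow (aug_ideal :: ('a \<Rightarrow>\<^sub>0 'r) set) n"
      and z: "z = (\<Sum>p\<leftarrow>ps. fst p * snd p)"
      by (auto simp: ideal_prod_def)
    show "z \<in> aug_span (Suc n)"
      unfolding z using ps Suc aug_ideal_subset_aug_span_1
      by (fastforce intro!: aug_span_sum_list aug_span_1_mult)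
  qed
qed

lemma aug_span_eq_0:
  fixes x :: "'a::comm_monoid_add \<Rightarrow>\<^sub>0 'r::comm_ring_1"
  assumes "\<And>as. length as = n \<Longrightarrow> (prod_list (map aug_gen as) :: 'a \<Rightarrow>\<^sub>0 'r) = 0"
    and "x \<in> aug_span n"
  shows "x = 0"
  using assms(2) by induct (simp_all add: assms(1))

lemma ideal_pow_aug_ideal_eq_0_iff:
  "ideal_pow (aug_ideal :: ('a::ab_group_add \<Rightarrow>\<^sub>0 'r::comm_ring_1) set) n = {0}
    \<longleftrightarrow> (\<forall>as. length as = n \<longrightarrow> (prod_list (map aug_gen as) :: 'a \<Rightarrow>\<^sub>0 'r) = 0)"
proof
  assume "ideal_pow (aug_ideal :: ('a \<Rightarrow>\<^sub>0 'r) set) n = {0}"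
  then show "\<forall>as. length as = n \<longrightarrow> (prod_list (map aug_gen as) :: 'a \<Rightarrow>\<^sub>0 'r) = 0"
    using prod_aug_gen_in_ideal_pow[where 'a='a and 'r='r] by auto
next
  assume prods: "\<forall>as. length as = n \<longrightarrow> (prod_list (map aug_gen as) :: 'a \<Rightarrow>\<^sub>0 'r) = 0"
  have "x = 0" if "x \<in> ideal_pow (aug_ideal :: ('a \<Rightarrow>\<^sub>0 'r) set) n" for x
  proof (rule aug_span_eq_0)
    show "x \<in> aug_span n"
      using that ideal_pow_subset_aug_span by blast
  qed (use prods in blast)
  then show "ideal_pow (aug_ideal :: ('a \<Rightarrow>\<^sub>0 'r) set) n = {0}"
    using zero_in_ideal_pow by blast
qed

lemma ideal_pow_aug_ideal_eq_0_iff_diff_coeffs_dvd: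
  assumes "is_Zmod TYPE('r::comm_ring_1) e"
  shows "ideal_pow (aug_ideal :: ('a::ab_group_add \<Rightarrow>\<^sub>0 'r) set) n = {0}
    \<longleftrightarrow> diff_coeffs_dvd TYPE('a) e n"
proof -
  have kernel: "(of_int k :: 'r) = 0 \<longleftrightarrow> int e dvd k" for k
    using assms by (simp add: is_Zmod_def)
  have "(prod_list (map aug_gen as) :: 'a \<Rightarrow>\<^sub>0 'r) = 0 \<longleftrightarrow> (\<forall>y. int e dvd diff_coeff as y)"
    for as :: "'a list"
    by (simp add: poly_mapping_eq_iff fun_eq_iff lookup_prod_aug_gen kernel)
  then show ?thesis
    by (simp add: ideal_pow_aug_ideal_eq_0_iff diff_coeffs_dvd_def)
qed

lemma nu_eq_least_enat:
  assumes "is_Zmod TYPE('r::comm_ring_1) e"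
  shows "nu TYPE('a::ab_group_add) TYPE('r) = least_enat (diff_coeffs_dvd TYPE('a) e)"
  using ideal_pow_aug_ideal_eq_0_iff_diff_coeffs_dvd[OF assms, where 'a='a]
  by (simp add: nu_def least_enat_def)

theorem theorem4p1:
  assumes "\<exists>x::'a::ab_group_add. x \<noteq> 0"
      and "\<exists>y::'b::ab_group_add. y \<noteq> 0"
      and "is_Zmod TYPE('r::comm_ring_1) (e_grp TYPE('b))"
  shows "delta TYPE('a) TYPE('b) = Some (nu TYPE('a) TYPE('r) - 1)
         \<and> (delta TYPE('a) TYPE('b) < Some \<infinity> \<longleftrightarrow>
              (\<exists>n. ideal_pow (aug_ideal :: ('a \<Rightarrow>\<^sub>0 'r) set) n = {0}))
         \<and> (((\<exists>z::'c::ab_group_add. z \<noteq> 0) \<and> e_grp TYPE('c) = e_grp TYPE('b))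
              \<longrightarrow> delta TYPE('a) TYPE('c) = delta TYPE('a) TYPE('b))"
proof (intro conjI impI)
  let ?D = "diff_coeffs_dvd TYPE('a) (e_grp TYPE('b))"
  have delta: "delta TYPE('a) TYPE('b) = Some (least_enat ?D - 1)"
    using assms(2) by (rule delta_eq_least_enat)
  have nu: "nu TYPE('a) TYPE('r) = least_enat ?D"
    using assms(3) by (rule nu_eq_least_enat)
  show "delta TYPE('a) TYPE('b) = Some (nu TYPE('a) TYPE('r) - 1)"
    by (simp add: delta nu)
  show "delta TYPE('a) TYPE('b) < Some \<infinity> \<longleftrightarrow> (\<exists>n. ideal_pow (aug_ideal :: ('a \<Rightarrow>\<^sub>0 'r) set) n = {0})"
    by (simp add: delta least_enat_def one_enat_def
        ideal_pow_aug_ideal_eq_0_iff_diff_coeffs_dvd[OF assms(3)])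
  show "delta TYPE('a) TYPE('c) = delta TYPE('a) TYPE('b)"
    if "(\<exists>z::'c::ab_group_add. z \<noteq> 0) \<and> e_grp TYPE('c) = e_grp TYPE('b)"
    using that by (simp add: delta delta_eq_least_enat)
qed

end
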